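(* Let $(A,\mu,\alpha,\beta)$ be a BiHom-commutative algebra, with $\mu(x\otimes y)=x\cdot y$, and let $D:A\to A$ be a derivation in the usual sense (i.e. $D(x\cdot y)=x\cdot D(y)+D(x)\cdot y$ for all $x,y$) commuting with $\alpha$ and $\beta$. Define $a\ast b=a\cdot D(b)$ for $a,b\in A$. Then $(A,\cdot,\ast,\alpha,\beta)$ is a BiHom-Novikov-Poisson algebra.
   Context: Work over a field. A BiHom-associative algebra is a 4-tuple $(A,\cdot,\alpha,\beta)$ with $\alpha,\beta:A\to A$ commuting linear maps, multiplicative for $\cdot$, and $\alpha(x)\cdot(y\cdot z)=(x\cdot y)\cdot\beta(z)$; it is BiHom-commutative if $\beta(a)\cdot\alpha(b)=\beta(b)\cdot\alpha(a)$ for all $a,b$. A BiHom-Novikov algebra is a 4-tuple $(A,\ast,\alpha,\beta)$ with commuting linear $\alpha,\beta$ multiplicative for $\ast$ such that $(\beta(x)\ast\alpha(y))\ast\beta(z)-\alpha\beta(x)\ast(\alpha(y)\ast z)=(\beta(y)\ast\alpha(x))\ast\beta(z)-\alpha\beta(y)\ast(\alpha(x)\ast z)$ and $(x\ast\beta(y))\ast\alpha\beta(z)=(x\ast\beta(z))\ast\alpha\beta(y)$ for all $x,y,z$. A BiHom-Novikov-Poisson algebra is a 5-tuple $(A,\cdot,\ast,\alpha,\beta)$ such that $(A,\cdot,\alpha,\beta)$ is BiHom-commutative, $(A,\ast,\alpha,\beta)$ is BiHom-Novikov, and for all $x,y,z$: $(\beta(x)\ast\alpha(y))\cdot\beta(z)-\alpha\beta(x)\ast(\alpha(y)\cdot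 z)=(\beta(y)\ast\alpha(x))\cdot\beta(z)-\alpha\beta(y)\ast(\alpha(x)\cdot z)$; $(x\cdot\beta(y))\ast\alpha\beta(z)=(x\ast\beta(z))\cdot\alpha\beta(y)$; $\alpha(x)\cdot(y\ast z)=(x\cdot y)\ast\beta(z)$. *)

theory Defs
  imports Main "HOL.Vector_Spaces"
begin

definition bilinear_op :: "('k::field \<Rightarrow> 'v::ab_group_add \<Rightarrow> 'v) \<Rightarrow> ('v \<Rightarrow> 'v \<Rightarrow> 'v) \<Rightarrow> bool" where
  "bilinear_op s m \<longleftrightarrow>
     (\<forall>x. Vector_Spaces.linear s s (m x)) \<and> (\<forall>y. Vector_Spaces.linear s s (\<lambda>x. m x y))"

definition bihom_structure ::
  "('k::field \<Rightarrow> 'v::ab_group_add \<Rightarrow> 'v) \<Rightarrow> ('v \<Rightarrow> 'v \<Rightarrow> 'v) \<Rightarrow> ('v \<Rightarrow> 'v) \<Rightarrow> ('v \<Rightarrow> 'v) \<Rightarrow> bool" where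
  "bihom_structure s m \<alpha> \<beta> \<longleftrightarrow>
     vector_space s \<and> bilinear_op s m \<and>
     Vector_Spaces.linear s s \<alpha> \<and> Vector_Spaces.linear s s \<beta> \<and>
     (\<forall>x. \<alpha> (\<beta> x) = \<beta> (\<alpha> x)) \<and>
     (\<forall>x y. \<alpha> (m x y) = m (\<alpha> x) (\<alpha> y)) \<and>
     (\<forall>x y. \<beta> (m x y) = m (\<beta> x) (\<beta> y))"

definition bihom_associative ::
  "('k::field \<Rightarrow> 'v::ab_group_add \<Rightarrow> 'v) \<Rightarrow> ('v \<Rightarrow> 'v \<Rightarrow> 'v) \<Rightarrow> ('v \<Rightarrow> 'v) \<Rightarrow> ('v \<Rightarrow> 'v) \<Rightarrow> bool" where
  "bihom_associative s m \<alpha> \<beta> \<longleftrightarrow>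
     bihom_structure s m \<alpha> \<beta> \<and>
     (\<forall>x y z. m (\<alpha> x) (m y z) = m (m x y) (\<beta> z))"

definition bihom_commutative ::
  "('k::field \<Rightarrow> 'v::ab_group_add \<Rightarrow> 'v) \<Rightarrow> ('v \<Rightarrow> 'v \<Rightarrow> 'v) \<Rightarrow> ('v \<Rightarrow> 'v) \<Rightarrow> ('v \<Rightarrow> 'v) \<Rightarrow> bool" where
  "bihom_commutative s m \<alpha> \<beta> \<longleftrightarrow>
     bihom_associative s m \<alpha> \<beta> \<and>
     (\<forall>a b. m (\<beta> a) (\<alpha> b) = m (\<beta> b) (\<alpha> a))"

definition bihom_novikov ::
  "('k::field \<Rightarrow> 'v::ab_group_add \<Rightarrow> 'v) \<Rightarrow> ('v \<Rightarrow> 'v \<Rightarrow> 'v) \<Rightarrow> ('v \<Rightarrow> 'v) \<Rightarrow> ('v \<Rightarrow> 'v) \<Rightarrow> bool" where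
  "bihom_novikov s n \<alpha> \<beta> \<longleftrightarrow>
     bihom_structure s n \<alpha> \<beta> \<and>
     (\<forall>x y z.
        n (n (\<beta> x) (\<alpha> y)) (\<beta> z) - n (\<alpha> (\<beta> x)) (n (\<alpha> y) z)
      = n (n (\<beta> y) (\<alpha> x)) (\<beta> z) - n (\<alpha> (\<beta> y)) (n (\<alpha> x) z)) \<and>
     (\<forall>x y z. n (n x (\<beta> y)) (\<alpha> (\<beta> z)) = n (n x (\<beta> z)) (\<alpha> (\<beta> y)))"

definition bihom_novikov_poisson ::
  "('k::field \<Rightarrow> 'v::ab_group_add \<Rightarrow> 'v) \<Rightarrow> ('v \<Rightarrow> 'v \<Rightarrow> 'v) \<Rightarrow> ('v \<Rightarrow> 'v \<Rightarrow> 'v)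
     \<Rightarrow> ('v \<Rightarrow> 'v) \<Rightarrow> ('v \<Rightarrow> 'v) \<Rightarrow> bool" where
  "bihom_novikov_poisson s m n \<alpha> \<beta> \<longleftrightarrow>
     bihom_commutative s m \<alpha> \<beta> \<and> bihom_novikov s n \<alpha> \<beta> \<and>
     (\<forall>x y z.
        m (n (\<beta> x) (\<alpha> y)) (\<beta> z) - n (\<alpha> (\<beta> x)) (m (\<alpha> y) z)
      = m (n (\<beta> y) (\<alpha> x)) (\<beta> z) - n (\<alpha> (\<beta> y)) (m (\<alpha> x) z)) \<and>
     (\<forall>x y z. n (m x (\<beta> y)) (\<alpha> (\<beta> z)) = m (n x (\<beta> z)) (\<alpha> (\<beta> y))) \<and>
     (\<forall>x y z. m (\<alpha> x) (n y z) = n (m x y) (\<beta> z))"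

end

theory Submission
  imports Defs
begin

text \<open>By the Leibniz rule and BiHom associativity,
\<open>\<alpha>\<beta>(x) \<cdot> D(\<alpha>(y) \<cdot> w) = (\<beta>(x) \<cdot> \<alpha>(y)) \<cdot> \<beta>D(w) + (\<beta>(x) \<cdot> \<alpha>D(y)) \<cdot> \<beta>(w)\<close>, so the
associator-type expression in the first Novikov and the first Poisson identity
equals \<open>-(\<beta>(x) \<cdot> \<alpha>(y)) \<cdot> \<beta>D(w)\<close>, which is symmetric in \<open>x, y\<close> by BiHom
commutativity. The right-commutativity identities hold because the right factors
of \<open>(x \<cdot> \<beta>(u)) \<cdot> \<alpha>\<beta>(w)\<close> can be exchanged, and the last Poisson identity is
BiHom associativity itself.\<close>

lemma bihom_structure_compose_right:
  assumes "bihom_structure s m \<alpha> \<beta>"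
    and "Vector_Spaces.linear s s D"
    and "\<And>x. D (\<alpha> x) = \<alpha> (D x)"
    and "\<And>x. D (\<beta> x) = \<beta> (D x)"
  shows "bihom_structure s (\<lambda>a b. m a (D b)) \<alpha> \<beta>"
proof -
  have "Vector_Spaces.linear s s (\<lambda>b. m x (D b))" for x
    using Vector_Spaces.linear_compose[OF assms(2), of s "m x"] assms(1)
    unfolding bihom_structure_def bilinear_op_def by (simp add: o_def)
  then have "bilinear_op s (\<lambda>a b. m a (D b))"
    using assms(1) unfolding bihom_structure_def bilinear_op_def by simp
  then show ?thesis
    using assms unfolding bihom_structure_def by simp
qed

lemma bihom_commutative_swap_right:
  assumes "bihom_commutative s m \<alpha> \<beta>"
  shows "m (m x (\<beta> u)) (\<alpha> (\<beta> w)) = m (m x (\<beta> w)) (\<alpha> (\<beta> u))"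
proof -
  have ab: "\<And>x. \<alpha> (\<beta> x) = \<beta> (\<alpha> x)"
    and as: "\<And>x y z. m (\<alpha> x) (m y z) = m (m x y) (\<beta> z)"
    and cm: "\<And>a b. m (\<beta> a) (\<alpha> b) = m (\<beta> b) (\<alpha> a)"
    using assms unfolding bihom_commutative_def bihom_associative_def bihom_structure_def
    by blast+
  have "m (m x (\<beta> u)) (\<alpha> (\<beta> w)) = m (\<alpha> x) (m (\<beta> u) (\<alpha> w))"
    by (simp add: ab as)
  also have "\<dots> = m (\<alpha> x) (m (\<beta> w) (\<alpha> u))"
    by (simp add: cm)
  also have "\<dots> = m (m x (\<beta> w)) (\<alpha> (\<beta> u))"
    by (simp add: ab as)
  finally show ?thesis .
qed

lemma bihom_associative_derivation_associator:
  assumes "bihom_associative s m \<alpha> \<beta>"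
    and "\<And>x y. D (m x y) = m x (D y) + m (D x) y"
    and "\<And>x. D (\<alpha> x) = \<alpha> (D x)"
  shows "m (m (\<beta> x) (\<alpha> (D y))) (\<beta> w) - m (\<alpha> (\<beta> x)) (D (m (\<alpha> y) w))
       = - m (m (\<beta> x) (\<alpha> y)) (\<beta> (D w))"
proof -
  have as: "\<And>x y z. m (\<alpha> x) (m y z) = m (m x y) (\<beta> z)"
    and "\<And>x. Vector_Spaces.linear s s (m x)"
    using assms(1) unfolding bihom_associative_def bihom_structure_def bilinear_op_def
    by blast+
  then have add_right: "\<And>x y z. m x (y + z) = m x y + m x z"
    unfolding linear_iff by blast
  have "m (\<alpha> (\<beta> x)) (D (m (\<alpha> y) w))
      = m (m (\<beta> x) (\<alpha> y)) (\<beta> (D w)) + m (m (\<beta> x) (\<alpha> (D y))) (\<beta> w)"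
    by (simp add: assms(2,3) add_right as)
  then show ?thesis by simp
qed

lemma bihom_commutative_derivation_associator_symmetric:
  assumes comm: "bihom_commutative s m \<alpha> \<beta>"
    and Leibniz: "\<And>x y. D (m x y) = m x (D y) + m (D x) y"
    and D_\<alpha>: "\<And>x. D (\<alpha> x) = \<alpha> (D x)"
  shows "m (m (\<beta> x) (\<alpha> (D y))) (\<beta> w) - m (\<alpha> (\<beta> x)) (D (m (\<alpha> y) w))
       = m (m (\<beta> y) (\<alpha> (D x))) (\<beta> w) - m (\<alpha> (\<beta> y)) (D (m (\<alpha> x) w))"
proof -
  have assoc: "bihom_associative s m \<alpha> \<beta>"
    and cm: "m (\<beta> x) (\<alpha> y) = m (\<beta> y) (\<alpha> x)"
    using comm unfolding bihom_commutative_def by blast+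
  have associator: "m (m (\<beta> a) (\<alpha> (D b))) (\<beta> w) - m (\<alpha> (\<beta> a)) (D (m (\<alpha> b) w))
      = - m (m (\<beta> a) (\<alpha> b)) (\<beta> (D w))" for a b
    by (rule bihom_associative_derivation_associator[OF assoc]) (fact Leibniz D_\<alpha>)+
  show ?thesis
    using associator[of x y] associator[of y x] cm by simp
qed

lemma bihom_novikov_derivation_product:
  assumes comm: "bihom_commutative s m \<alpha> \<beta>"
    and linear_D: "Vector_Spaces.linear s s D"
    and Leibniz: "\<And>x y. D (m x y) = m x (D y) + m (D x) y"
    and D_\<alpha>: "\<And>x. D (\<alpha> x) = \<alpha> (D x)"
    and D_\<beta>: "\<And>x. D (\<beta> x) = \<beta> (D x)"
  shows "bihom_novikov s (\<lambda>a b. m a (D b)) \<alpha> \<beta>"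
proof -
  have "bihom_structure s (\<lambda>a b. m a (D b)) \<alpha> \<beta>"
    by (rule bihom_structure_compose_right)
      (use comm linear_D D_\<alpha> D_\<beta> in \<open>auto simp: bihom_commutative_def bihom_associative_def\<close>)
  moreover have "m (m (\<beta> x) (D (\<alpha> y))) (D (\<beta> z)) - m (\<alpha> (\<beta> x)) (D (m (\<alpha> y) (D z)))
      = m (m (\<beta> y) (D (\<alpha> x))) (D (\<beta> z)) - m (\<alpha> (\<beta> y)) (D (m (\<alpha> x) (D z)))" for x y z
    using bihom_commutative_derivation_associator_symmetric[OF comm, of D x y "D z"]
    by (simp add: Leibniz D_\<alpha> D_\<beta>)
  moreover have "m (m x (D (\<beta> y))) (D (\<alpha> (\<beta> z))) = m (m x (D (\<beta> z))) (D (\<alpha> (\<beta> y)))"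
    for x y z
    using bihom_commutative_swap_right[OF comm] by (simp add: D_\<alpha> D_\<beta>)
  ultimately show ?thesis
    unfolding bihom_novikov_def by blast
qed

theorem proposition3p4:
  fixes s :: "'k::field \<Rightarrow> 'v::ab_group_add \<Rightarrow> 'v"
    and m :: "'v \<Rightarrow> 'v \<Rightarrow> 'v"
    and \<alpha> \<beta> D :: "'v \<Rightarrow> 'v"
  assumes "bihom_commutative s m \<alpha> \<beta>"
    and "Vector_Spaces.linear s s D"
    and "\<And>x y. D (m x y) = m x (D y) + m (D x) y"
    and "\<And>x. D (\<alpha> x) = \<alpha> (D x)"
    and "\<And>x. D (\<beta> x) = \<beta> (D x)"
  shows "bihom_novikov_poisson s m (\<lambda>a b. m a (D b)) \<alpha> \<beta>"
proof -
  have as: "\<And>x y z. m (\<alpha> x) (m y z) = m (m x y) (\<beta> z)"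
    using assms(1) unfolding bihom_commutative_def bihom_associative_def by blast
  have "bihom_novikov s (\<lambda>a b. m a (D b)) \<alpha> \<beta>"
    by (rule bihom_novikov_derivation_product) (fact assms)+
  moreover have "m (m (\<beta> x) (D (\<alpha> y))) (\<beta> z) - m (\<alpha> (\<beta> x)) (D (m (\<alpha> y) z))
      = m (m (\<beta> y) (D (\<alpha> x))) (\<beta> z) - m (\<alpha> (\<beta> y)) (D (m (\<alpha> x) z))" for x y z
    using bihom_commutative_derivation_associator_symmetric[OF assms(1), of D x y z]
    by (simp add: assms(3,4))
  moreover have "m (m x (\<beta> y)) (D (\<alpha> (\<beta> z))) = m (m x (D (\<beta> z))) (\<alpha> (\<beta> y))" for x y z
    using bihom_commutative_swap_right[OF assms(1), of x y "D z"] by (simp add: assms(4,5))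
  moreover have "m (\<alpha> x) (m y (D z)) = m (m x y) (D (\<beta> z))" for x y z
    by (simp add: as assms(5))
  ultimately show ?thesis
    using assms(1) unfolding bihom_novikov_poisson_def by blast
qed

end
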